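(* For all $j,k\geq2$ with $j<k$, $\mathsf{TS}^1_j\nleq_{\mathrm{W}}\mathsf{TS}^1_k$.
   Context: For $k\geq2$, $\mathsf{TS}^1_k$ is the problem whose instances are colorings $f:\omega\to k$ and whose solutions are infinite sets $S$ together with a color $c<k$ such that $f(x)\neq c$ for all $x\in S$ (thin sets). $\mathsf{P}\leq_{\mathrm{W}}\mathsf{Q}$ means there are Turing functionals $\Phi,\Psi$ such that for every instance $A$ of $\mathsf{P}$, $\Phi(A)$ is an instance of $\mathsf{Q}$, and for every solution $T$ to $\Phi(A)$, $\Psi(A\oplus T)$ is a solution to $A$. *)

theory Defs
  imports Main
begin

text \<open>Oracle mu-recursive functions: a standard model of Turing functionals.
  Oracles are total functions nat => nat (sets are given by characteristic functions).\<close>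

datatype recf =
    Z
  | S
  | Id nat
  | Orc
  | Cn recf "recf list"
  | Pr recf recf
  | Mn recf

inductive eval :: "(nat \<Rightarrow> nat) \<Rightarrow> recf \<Rightarrow> nat list \<Rightarrow> nat \<Rightarrow> bool" for X where
  eval_Z: "eval X Z xs 0"
| eval_S: "eval X S (x # xs) (Suc x)"
| eval_Id: "i < length xs \<Longrightarrow> eval X (Id i) xs (xs ! i)"
| eval_Orc: "eval X Orc (x # xs) (X x)"
| eval_Cn: "length ys = length gs \<Longrightarrow> (\<forall>i < length gs. eval X (gs ! i) xs (ys ! i))
             \<Longrightarrow> eval X f ys r \<Longrightarrow> eval X (Cn f gs) xs r"
| eval_Pr0: "eval X f xs r \<Longrightarrow> eval X (Pr f g) (0 # xs) r"
| eval_PrS: "eval X (Pr f g) (n # xs) r \<Longrightarrow> eval X g (n # r # xs) s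
             \<Longrightarrow> eval X (Pr f g) (Suc n # xs) s"
| eval_Mn: "eval X f (n # xs) 0 \<Longrightarrow> (\<forall>m < n. \<exists>y. eval X f (m # xs) (Suc y))
             \<Longrightarrow> eval X (Mn f) xs n"

definition fn_total :: "recf \<Rightarrow> (nat \<Rightarrow> nat) \<Rightarrow> bool" where
  "fn_total e X \<longleftrightarrow> (\<forall>n. \<exists>y. eval X e [n] y)"

definition fn_app :: "recf \<Rightarrow> (nat \<Rightarrow> nat) \<Rightarrow> (nat \<Rightarrow> nat)" where
  "fn_app e X = (\<lambda>n. THE y. eval X e [n] y)"

definition join :: "(nat \<Rightarrow> nat) \<Rightarrow> (nat \<Rightarrow> nat) \<Rightarrow> (nat \<Rightarrow> nat)" where
  "join A B = (\<lambda>n. if even n then A (n div 2) else B (n div 2))"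

text \<open>A problem: a predicate on instances and a solution relation (instance, solution).\<close>
type_synonym problem = "((nat \<Rightarrow> nat) \<Rightarrow> bool) \<times> ((nat \<Rightarrow> nat) \<Rightarrow> (nat \<Rightarrow> nat) \<Rightarrow> bool)"

definition weihrauch_le :: "problem \<Rightarrow> problem \<Rightarrow> bool" where
  "weihrauch_le P Q \<longleftrightarrow>
     (\<exists>\<Phi> \<Psi>. \<forall>A. fst P A \<longrightarrow>
        fn_total \<Phi> A \<and> fst Q (fn_app \<Phi> A) \<and>
        (\<forall>T. snd Q (fn_app \<Phi> A) T \<longrightarrow>
             fn_total \<Psi> (join A T) \<and> snd P A (fn_app \<Psi> (join A T))))"

text \<open>TS^1_k. Instances: colourings f : omega -> k. Solutions: pairs (S, c), encoded as
  T with T 0 = c and T (n+1) the characteristic function of S at n.\<close>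
definition TS1 :: "nat \<Rightarrow> problem" where
  "TS1 k = ((\<lambda>f. \<forall>x. f x < k),
            (\<lambda>f T. T 0 < k \<and> (\<forall>n. T (Suc n) \<le> 1) \<and> infinite {n. T (Suc n) = 1}
                   \<and> (\<forall>n. T (Suc n) = 1 \<longrightarrow> f n \<noteq> T 0)))"

end

theory Submission
  imports Defs "HOL-Library.Sublist"
begin

(* Suppose Phi and Psi witness TS1 j <=_W TS1 k with j < k.
   (1) Oracle computations are deterministic and use only finitely many oracle
       values; hence finitely many output values of a total functional are
       preserved by every oracle agreeing with the given one on an initial segment.
   (2) Forcing/pigeonhole: for F = fn_app Phi there are a finite j-colouring
       sigma and a colour c < k such that no extension tau of sigma together with
       a padding colour d < j forces "F (tau padded by d) is cofinitely c".
       Otherwise one could force all k colours, each with some d < j, and two of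
       them would share the same d on a common extension.
   (3) Continuity: if the canonical solution (c, {n. F A n ~= c}) is valid for
       A = rho0 padded by d0, then the colour d of Psi's answer is the same for all
       instances extending a suitable finite extension tau of rho0.
   The theorem: pad tau by d, keeping F infinitely often different from c by (2).
   Psi answers with colour d by (3), but a colouring that is eventually d has no
   infinite thin set avoiding d. *)

section \<open>Determinism and finite use of oracle computations\<close>

lemma eval_det: "eval X e xs y \<Longrightarrow> eval X e xs y' \<Longrightarrow> y = y'"
proof (induction arbitrary: y' rule: eval.induct)
  case (eval_Z xs) then show ?case by (cases rule: eval.cases) auto
next
  case (eval_S x xs) then show ?case by (cases rule: eval.cases) auto
next
  case (eval_Id i xs) from eval_Id.prems show ?case by (cases rule: eval.cases) auto
next
  case (eval_Orc x xs) then show ?case by (cases rule: eval.cases) auto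
next
  case (eval_Cn ys gs xs f r)
  from eval_Cn.prems obtain ys' where ys': "length ys' = length gs"
    "\<forall>i<length gs. eval X (gs ! i) xs (ys' ! i)" "eval X f ys' y'"
    by (cases rule: eval.cases) auto
  have "ys = ys'"
    by (rule nth_equalityI) (use ys' eval_Cn.hyps(1) eval_Cn.IH(1) in auto)
  then show ?case using eval_Cn.IH(2) ys'(3) by blast
next
  case (eval_Pr0 f xs r g)
  from eval_Pr0.prems have "eval X f xs y'" by (cases rule: eval.cases) auto
  then show ?case using eval_Pr0.IH by blast
next
  case (eval_PrS f g n xs r s)
  from eval_PrS.prems obtain r' where "eval X (Pr f g) (n # xs) r'" "eval X g (n # r' # xs) y'"
    by (cases rule: eval.cases) auto
  then show ?case using eval_PrS.IH by auto
next
  case (eval_Mn f n xs)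
  from eval_Mn.prems have y': "eval X f (y' # xs) 0 \<and> (\<forall>m<y'. \<exists>y. eval X f (m # xs) (Suc y))"
    by (cases rule: eval.cases) auto
  text \<open>Both results are the least zero of the same function.\<close>
  have "\<not> n < y'" using y' eval_Mn.IH(1) by fastforce
  moreover have "\<not> y' < n" using y' eval_Mn.IH(2) by fastforce
  ultimately show ?case by simp
qed

lemma eval_finite_use:
  "eval X e xs y \<Longrightarrow> \<exists>U. finite U \<and> (\<forall>Y. (\<forall>q\<in>U. Y q = X q) \<longrightarrow> eval Y e xs y)"
proof (induction rule: eval.induct)
  case (eval_Z xs) then show ?case by (auto intro: eval.intros)
next
  case (eval_S x xs) then show ?case by (auto intro: eval.intros)
next
  case (eval_Id i xs) then show ?case by (auto intro: eval.intros)
next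
  case (eval_Orc x xs)
  have "eval Y Orc (x # xs) (X x)" if "Y x = X x" for Y
    using eval.eval_Orc[of Y x xs] that by simp
  then show ?case by (intro exI[of _ "{x}"]) auto
next
  case (eval_Cn ys gs xs f r)
  obtain U where U: "\<forall>i<length gs. finite (U i) \<and>
      (\<forall>Y. (\<forall>q\<in>U i. Y q = X q) \<longrightarrow> eval Y (gs ! i) xs (ys ! i))"
    using eval_Cn.IH(1) by metis
  obtain U0 where U0: "finite U0" "\<forall>Y. (\<forall>q\<in>U0. Y q = X q) \<longrightarrow> eval Y f ys r"
    using eval_Cn.IH(2) by blast
  have "eval Y (Cn f gs) xs r" if agree: "\<forall>q\<in>U0 \<union> (\<Union>i<length gs. U i). Y q = X q" for Y
  proof (rule eval.eval_Cn[OF eval_Cn.hyps(1)])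
    show "\<forall>i<length gs. eval Y (gs ! i) xs (ys ! i)"
    proof (intro allI impI)
      fix i assume "i < length gs"
      then show "eval Y (gs ! i) xs (ys ! i)" using U agree by blast
    qed
    show "eval Y f ys r" using U0 agree by blast
  qed
  then show ?case using U U0(1) by (intro exI[of _ "U0 \<union> (\<Union>i<length gs. U i)"]) auto
next
  case (eval_Pr0 f xs r g)
  then show ?case by (auto intro: eval.intros)
next
  case (eval_PrS f g n xs r s)
  then obtain U1 U2 where "finite U1" "\<forall>Y. (\<forall>q\<in>U1. Y q = X q) \<longrightarrow> eval Y (Pr f g) (n # xs) r"
    "finite U2" "\<forall>Y. (\<forall>q\<in>U2. Y q = X q) \<longrightarrow> eval Y g (n # r # xs) s" by blast
  then show ?case by (intro exI[of _ "U1 \<union> U2"]) (auto intro: eval.intros)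
next
  case (eval_Mn f n xs)
  obtain y U where U: "\<forall>m<n. finite (U m) \<and>
      (\<forall>Y. (\<forall>q\<in>U m. Y q = X q) \<longrightarrow> eval Y f (m # xs) (Suc (y m)))"
    using eval_Mn.IH(2) by metis
  obtain U0 where U0: "finite U0" "\<forall>Y. (\<forall>q\<in>U0. Y q = X q) \<longrightarrow> eval Y f (n # xs) 0"
    using eval_Mn.IH(1) by blast
  have "eval Y (Mn f) xs n" if agree: "\<forall>q\<in>U0 \<union> (\<Union>m<n. U m). Y q = X q" for Y
  proof (rule eval.eval_Mn)
    show "eval Y f (n # xs) 0" using U0 agree by blast
    show "\<forall>m<n. \<exists>z. eval Y f (m # xs) (Suc z)"
    proof (intro allI impI)
      fix m assume "m < n"
      then show "\<exists>z. eval Y f (m # xs) (Suc z)" using U agree by blast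
    qed
  qed
  then show ?case using U U0(1) by (intro exI[of _ "U0 \<union> (\<Union>m<n. U m)"]) auto
qed

lemma fn_app_eval: "fn_total e X \<Longrightarrow> eval X e [n] (fn_app e X n)"
  unfolding fn_total_def fn_app_def by (metis eval_det theI)

lemma fn_app_eqI: "eval X e [n] y \<Longrightarrow> fn_app e X n = y"
  unfolding fn_app_def by (metis eval_det the_equality)

lemma fn_app_continuous:
  assumes "fn_total e X"
  shows "\<exists>N. \<forall>Y. (\<forall>q<N. Y q = X q) \<longrightarrow> (\<forall>m<b. fn_app e Y m = fn_app e X m)"
proof (induction b)
  case (Suc b)
  then obtain N where N: "\<forall>Y. (\<forall>q<N. Y q = X q) \<longrightarrow> (\<forall>m<b. fn_app e Y m = fn_app e X m)"
    by blast
  obtain U where U: "finite U" "\<forall>Y. (\<forall>q\<in>U. Y q = X q) \<longrightarrow> eval Y e [b] (fn_app e X b)"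
    using eval_finite_use[OF fn_app_eval[OF assms]] by blast
  obtain N' where N': "\<forall>q\<in>U. q < N'"
    using U(1) finite_nat_set_iff_bounded by blast
  have "\<forall>m<Suc b. fn_app e Y m = fn_app e X m" if agree: "\<forall>q<max N N'. Y q = X q" for Y
  proof -
    have "\<forall>q<N. Y q = X q" using agree less_max_iff_disj by blast
    then have "\<forall>m<b. fn_app e Y m = fn_app e X m" using N by blast
    moreover have "\<forall>q\<in>U. Y q = X q" using N' agree less_max_iff_disj by blast
    then have "fn_app e Y b = fn_app e X b" using U(2) fn_app_eqI by blast
    ultimately show ?thesis by (simp add: less_Suc_eq)
  qed
  then show ?case by blast
qed simp

section \<open>Finite colourings and forcing\<close>

definition extend :: "nat list \<Rightarrow> nat \<Rightarrow> nat \<Rightarrow> nat" where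
  "extend \<sigma> d n = (if n < length \<sigma> then \<sigma> ! n else d)"

lemma extend_prefix: "prefix \<tau> \<rho> \<Longrightarrow> n < length \<tau> \<Longrightarrow> extend \<rho> d n = \<tau> ! n"
  unfolding extend_def prefix_def by (auto simp: nth_append)

lemma extend_replicate: "extend (\<sigma> @ replicate m d) d = extend \<sigma> d"
  unfolding extend_def by (auto simp: nth_append)

lemma extend_bounded: "set \<sigma> \<subseteq> {..<j} \<Longrightarrow> d < j \<Longrightarrow> extend \<sigma> d n < j"
  unfolding extend_def using nth_mem by fastforce

definition forces_cofinitely ::
    "((nat \<Rightarrow> nat) \<Rightarrow> nat \<Rightarrow> nat) \<Rightarrow> nat \<Rightarrow> nat list \<Rightarrow> nat \<Rightarrow> nat \<Rightarrow> bool" where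
  "forces_cofinitely F j \<sigma> d c \<longleftrightarrow>
     (\<forall>\<rho>. prefix \<sigma> \<rho> \<longrightarrow> set \<rho> \<subseteq> {..<j} \<longrightarrow> finite {n. F (extend \<rho> d) n \<noteq> c})"

lemma forces_cofinitely_mono:
  "forces_cofinitely F j \<sigma> d c \<Longrightarrow> prefix \<sigma> \<tau> \<Longrightarrow> forces_cofinitely F j \<tau> d c"
  unfolding forces_cofinitely_def using prefix_order.trans by blast

lemma forces_cofinitely_unique:
  assumes "forces_cofinitely F j \<sigma> d c1" "forces_cofinitely F j \<sigma> d c2" "set \<sigma> \<subseteq> {..<j}"
  shows "c1 = c2"
proof (rule ccontr)
  assume "c1 \<noteq> c2"
  then have "UNIV \<subseteq> {n. F (extend \<sigma> d) n \<noteq> c1} \<union> {n. F (extend \<sigma> d) n \<noteq> c2}"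
    by auto
  moreover have "finite ({n. F (extend \<sigma> d) n \<noteq> c1} \<union> {n. F (extend \<sigma> d) n \<noteq> c2})"
    using assms unfolding forces_cofinitely_def by blast
  ultimately show False using finite_subset infinite_UNIV_nat by blast
qed

text \<open>Pigeonhole forcing lemma: since there are fewer padding colours than target
  colours, some \<open>\<sigma>\<close> and \<open>c < k\<close> are such that no extension of \<open>\<sigma>\<close> forces \<open>F\<close> to be
  cofinitely \<open>c\<close>, whatever the padding colour.\<close>
lemma unforceable_colour:
  fixes F :: "(nat \<Rightarrow> nat) \<Rightarrow> nat \<Rightarrow> nat"
  assumes "j < k"
  shows "\<exists>\<sigma> c. set \<sigma> \<subseteq> {..<j} \<and> c < k \<and>
           (\<forall>\<tau> d. prefix \<sigma> \<tau> \<longrightarrow> set \<tau> \<subseteq> {..<j} \<longrightarrow> d < j \<longrightarrow> \<not> forces_cofinitely F j \<tau> d c)"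
proof (rule ccontr)
  assume "\<not> ?thesis"
  then have step: "\<exists>\<tau> d. prefix \<sigma> \<tau> \<and> set \<tau> \<subseteq> {..<j} \<and> d < j \<and> forces_cofinitely F j \<tau> d c"
    if "set \<sigma> \<subseteq> {..<j}" "c < k" for \<sigma> c
    using that by blast
  text \<open>Force the colours \<open>0, \<dots>, m - 1\<close> one after another.\<close>
  have "\<exists>\<sigma> ds. set \<sigma> \<subseteq> {..<j} \<and> (\<forall>i<m. ds i < j \<and> forces_cofinitely F j \<sigma> (ds i) i)"
    if "m \<le> k" for m
    using that
  proof (induction m)
    case (Suc m)
    then obtain \<sigma> ds where IH: "set \<sigma> \<subseteq> {..<j}" "\<forall>i<m. ds i < j \<and> forces_cofinitely F j \<sigma> (ds i) i"
      by auto
    obtain \<tau> d where \<tau>: "prefix \<sigma> \<tau>" "set \<tau> \<subseteq> {..<j}" "d < j" "forces_cofinitely F j \<tau> d m"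
      using step[OF IH(1), of m] Suc.prems by auto
    have "\<forall>i<Suc m. (ds(m := d)) i < j \<and> forces_cofinitely F j \<tau> ((ds(m := d)) i) i"
      using IH(2) \<tau> forces_cofinitely_mono by (auto simp: less_Suc_eq)
    then show ?case using \<tau>(2) by blast
  qed (rule exI[of _ "[]"], simp)
  then obtain \<sigma> ds where \<sigma>: "set \<sigma> \<subseteq> {..<j}" "\<forall>i<k. ds i < j \<and> forces_cofinitely F j \<sigma> (ds i) i"
    by blast
  have "card (ds ` {..<k}) \<le> card {..<j}"
    using \<sigma>(2) by (intro card_mono) auto
  then have "\<not> inj_on ds {..<k}"
    using assms card_image by fastforce
  then obtain i1 i2 where "i1 < k" "i2 < k" "i1 \<noteq> i2" "ds i1 = ds i2"
    unfolding inj_on_def by auto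
  then show False
    using \<sigma> forces_cofinitely_unique by metis
qed

section \<open>Instances and solutions of thin set problems\<close>

lemma extend_TS1_instance: "set \<rho> \<subseteq> {..<j} \<Longrightarrow> d < j \<Longrightarrow> fst (TS1 j) (extend \<rho> d)"
  by (simp add: TS1_def extend_bounded)

definition thin_solution :: "nat \<Rightarrow> (nat \<Rightarrow> nat) \<Rightarrow> nat \<Rightarrow> nat" where
  "thin_solution c f n = (case n of 0 \<Rightarrow> c | Suc m \<Rightarrow> if f m \<noteq> c then 1 else 0)"

lemma thin_solution_TS1:
  assumes "c < k" "infinite {n. f n \<noteq> c}"
  shows "snd (TS1 k) f (thin_solution c f)"
proof -
  have "{n. thin_solution c f (Suc n) = 1} = {n. f n \<noteq> c}"
    by (auto simp: thin_solution_def)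
  then show ?thesis using assms by (auto simp: TS1_def thin_solution_def)
qed

lemma thin_solution_agree:
  assumes "\<forall>m<b. f m = f' m" "q < b"
  shows "thin_solution c f q = thin_solution c f' q"
  using assms by (cases q) (auto simp: thin_solution_def)

lemma join_agree:
  assumes "\<forall>q<b. A q = A' q" "\<forall>q<b. T q = T' q" "q < b"
  shows "join A T q = join A' T' q"
  using assms by (simp add: join_def)

text \<open>A colouring which is eventually \<open>d\<close> has no infinite thin set avoiding \<open>d\<close>.\<close>
lemma TS1_solution_colour_eventually:
  assumes "snd (TS1 j) (extend \<rho> d) T"
  shows "T 0 \<noteq> d"
proof
  assume "T 0 = d"
  then have "{n. T (Suc n) = 1} \<subseteq> {..<length \<rho>}"
    using assms by (auto simp: TS1_def extend_def split: if_splits)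
  then show False
    using assms finite_subset by (auto simp: TS1_def)
qed

section \<open>Diagonalising against a reduction\<close>

definition reduction_witness :: "problem \<Rightarrow> problem \<Rightarrow> recf \<Rightarrow> recf \<Rightarrow> bool" where
  "reduction_witness P Q \<Phi> \<Psi> \<longleftrightarrow> (\<forall>A. fst P A \<longrightarrow>
     fn_total \<Phi> A \<and> fst Q (fn_app \<Phi> A) \<and>
     (\<forall>T. snd Q (fn_app \<Phi> A) T \<longrightarrow> fn_total \<Psi> (join A T) \<and> snd P A (fn_app \<Psi> (join A T))))"

lemma weihrauch_le_reduction_witness:
  "weihrauch_le P Q \<longleftrightarrow> (\<exists>\<Phi> \<Psi>. reduction_witness P Q \<Phi> \<Psi>)"
  unfolding weihrauch_le_def reduction_witness_def by blast

definition canonical_answer :: "recf \<Rightarrow> recf \<Rightarrow> nat \<Rightarrow> (nat \<Rightarrow> nat) \<Rightarrow> nat \<Rightarrow> nat" where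
  "canonical_answer \<Phi> \<Psi> c A = fn_app \<Psi> (join A (thin_solution c (fn_app \<Phi> A)))"

lemma canonical_answer_TS1:
  assumes "reduction_witness (TS1 j) (TS1 k) \<Phi> \<Psi>" "fst (TS1 j) A"
    and "c < k" "infinite {n. fn_app \<Phi> A n \<noteq> c}"
  shows "fn_total \<Psi> (join A (thin_solution c (fn_app \<Phi> A)))"
    and "snd (TS1 j) A (canonical_answer \<Phi> \<Psi> c A)"
  using assms thin_solution_TS1 unfolding reduction_witness_def canonical_answer_def by blast+

text \<open>By continuity of \<open>\<Phi>\<close> and \<open>\<Psi>\<close>, the colour of the canonical answer is constant on a
  neighbourhood of any instance for which the canonical solution is valid: all colourings
  extending a suitable finite colouring \<open>\<tau>\<close> get the same colour \<open>d\<close>.\<close>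
lemma canonical_answer_colour_locally_constant:
  assumes red: "reduction_witness (TS1 j) (TS1 k) \<Phi> \<Psi>"
    and \<rho>0: "set \<rho>0 \<subseteq> {..<j}" "d0 < j" and c: "c < k"
    and inf: "infinite {n. fn_app \<Phi> (extend \<rho>0 d0) n \<noteq> c}"
  shows "\<exists>\<tau> d. prefix \<rho>0 \<tau> \<and> set \<tau> \<subseteq> {..<j} \<and> d < j \<and>
           (\<forall>\<rho> e. prefix \<tau> \<rho> \<longrightarrow> canonical_answer \<Phi> \<Psi> c (extend \<rho> e) 0 = d)"
proof -
  define A0 where "A0 = extend \<rho>0 d0"
  define d where "d = canonical_answer \<Phi> \<Psi> c A0 0"
  have inst0: "fst (TS1 j) A0"
    unfolding A0_def by (rule extend_TS1_instance[OF \<rho>0])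
  note answer0 = canonical_answer_TS1[OF red inst0 c inf[folded A0_def]]
  have "d < j" using answer0(2) by (simp add: TS1_def d_def)
  text \<open>\<open>d\<close> depends on the first \<open>b\<close> bits of the joined oracle, and the first \<open>b\<close>
    values of \<open>\<Phi>(A0)\<close> depend on the first \<open>N\<close> values of \<open>A0\<close>.\<close>
  obtain b where b: "\<And>Y. \<forall>q<b. Y q = join A0 (thin_solution c (fn_app \<Phi> A0)) q \<Longrightarrow> fn_app \<Psi> Y 0 = d"
    using fn_app_continuous[OF answer0(1), of 1] by (auto simp: d_def canonical_answer_def)
  obtain N where N: "\<And>Y. \<forall>q<N. Y q = A0 q \<Longrightarrow> \<forall>m<b. fn_app \<Phi> Y m = fn_app \<Phi> A0 m"
    using fn_app_continuous[of \<Phi> A0 b] red inst0 unfolding reduction_witness_def by blast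
  define \<tau> where "\<tau> = \<rho>0 @ replicate (max N b) d0"
  have "canonical_answer \<Phi> \<Psi> c (extend \<rho> e) 0 = d" if "prefix \<tau> \<rho>" for \<rho> e
  proof -
    have "extend \<rho> e q = A0 q" if "q < max N b" for q
    proof -
      have "q < length \<tau>" using that by (simp add: \<tau>_def)
      then have "extend \<rho> e q = extend \<tau> d0 q"
        using extend_prefix[OF \<open>prefix \<tau> \<rho>\<close>] extend_prefix[OF prefix_order.refl] by metis
      then show ?thesis by (simp add: A0_def \<tau>_def extend_replicate)
    qed
    then have "\<forall>q<max N b. extend \<rho> e q = A0 q" by blast
    then have "\<forall>q<N. extend \<rho> e q = A0 q" "\<forall>q<b. extend \<rho> e q = A0 q"
      using less_max_iff_disj by blast+
    then have "\<forall>q<b. extend \<rho> e q = A0 q" "\<forall>m<b. fn_app \<Phi> (extend \<rho> e) m = fn_app \<Phi> A0 m"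
      using N by blast+
    then show ?thesis
      using b join_agree thin_solution_agree by (simp add: canonical_answer_def)
  qed
  moreover have "prefix \<rho>0 \<tau>" "set \<tau> \<subseteq> {..<j}"
    using \<rho>0 by (auto simp: \<tau>_def)
  ultimately show ?thesis using \<open>d < j\<close> by blast
qed

text \<open>Pad with the committed colour \<open>d\<close> while keeping the instance unforced: the answer
  still has colour \<open>d\<close>, although the colouring is eventually \<open>d\<close>.\<close>
theorem theorem5p18:
  fixes j k :: nat
  assumes "2 \<le> j" and "2 \<le> k" and "j < k"
  shows "\<not> weihrauch_le (TS1 j) (TS1 k)"
proof
  assume "weihrauch_le (TS1 j) (TS1 k)"
  then obtain \<Phi> \<Psi> where red: "reduction_witness (TS1 j) (TS1 k) \<Phi> \<Psi>"
    unfolding weihrauch_le_reduction_witness by blast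
  obtain \<sigma> c where \<sigma>: "set \<sigma> \<subseteq> {..<j}" "c < k" and unforced:
    "\<And>\<tau> d. prefix \<sigma> \<tau> \<Longrightarrow> set \<tau> \<subseteq> {..<j} \<Longrightarrow> d < j \<Longrightarrow> \<not> forces_cofinitely (fn_app \<Phi>) j \<tau> d c"
    using unforceable_colour[OF assms(3), of "fn_app \<Phi>"] by blast
  have j0: "0 < j" using assms(1) by simp
  obtain \<rho>0 where \<rho>0: "prefix \<sigma> \<rho>0" "set \<rho>0 \<subseteq> {..<j}" "infinite {n. fn_app \<Phi> (extend \<rho>0 0) n \<noteq> c}"
    using unforced[OF prefix_order.refl \<sigma>(1) j0] unfolding forces_cofinitely_def by blast
  obtain \<tau> d where \<tau>: "prefix \<rho>0 \<tau>" "set \<tau> \<subseteq> {..<j}" "d < j"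
    and answer: "\<And>\<rho> e. prefix \<tau> \<rho> \<Longrightarrow> canonical_answer \<Phi> \<Psi> c (extend \<rho> e) 0 = d"
    using canonical_answer_colour_locally_constant[OF red \<rho>0(2) j0 \<sigma>(2) \<rho>0(3)] by blast
  obtain \<rho> where \<rho>: "prefix \<tau> \<rho>" "set \<rho> \<subseteq> {..<j}" "infinite {n. fn_app \<Phi> (extend \<rho> d) n \<noteq> c}"
    using unforced[OF prefix_order.trans[OF \<rho>0(1) \<tau>(1)] \<tau>(2,3)]
    unfolding forces_cofinitely_def by blast
  have "snd (TS1 j) (extend \<rho> d) (canonical_answer \<Phi> \<Psi> c (extend \<rho> d))"
    using canonical_answer_TS1(2)[OF red extend_TS1_instance[OF \<rho>(2) \<tau>(3)] \<sigma>(2) \<rho>(3)] .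
  then show False
    using answer[OF \<rho>(1)] TS1_solution_colour_eventually by blast
qed

end
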